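(* Let $\mathcal H$ be a well-structured preconditioner set and $\{f_t\}_{t\in\mathcal T}$ a family of random differentiable functions $\mathbb R^d\to\mathbb R$. Then $$\sigma_{\|\cdot\|_{\mathcal H,*}}(\{f_t\}_{t\in\mathcal T})^2\le\sigma_{\mathcal H}(\{f_t\}_{t\in\mathcal T})^2\le d\cdot\sigma_{\|\cdot\|_{\mathcal H,*}}(\{f_t\}_{t\in\mathcal T})^2.$$
   Context: $\mathcal S^d_+$ (resp. $\mathcal S^d_{++}$) denotes the set of real symmetric positive semidefinite (resp. positive definite) $d\times d$ matrices. A set $\mathcal H\subseteq\mathcal S_+^d$ is a well-structured preconditioner set if $\mathcal H=\mathcal S_+^d\cap\mathcal K$ for some set $\mathcal K$ of real $d\times d$ matrices that is closed under scalar multiplication, matrix addition and matrix multiplication and contains the identity $I_d$. For $H\in\mathcal S_+^d$, $\|x\|_H=\sqrt{x^\top Hx}$; $\|x\|_{\mathcal H}:=\sup_{H\in\mathcal H,\operatorname{Tr}(H)\le1}\|x\|_H$ and $\|y\|_{\mathcal H,*}:=\sup_{\|x\|_{\mathcal H}\le1}\langle x,y\rangle$. For a norm $\|\cdot\|$: $\sigma_{\|\cdot\|}(\{f_t\})^2:=\sup_{t\in\mathcal T,x\in\mathbb R^d}\mathbb E\|\nabla f_t(x)-\mathbb E[\nabla f_t(x)]\|^2$. Adaptive gradient variance: $\sigma_{\mathcal H}(\{f_t\})^2:=\inf_{H\in\mathcal H\cap\mathcal S^d_{++},\operatorname{Tr}(H)\le1}\sup_{t\in\mathcal T,x\in\mathbb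 R^d}\mathbb E\|\nabla f_t(x)-\mathbb E[\nabla f_t(x)]\|_{H^{-1}}^2$. *)

theory Defs
  imports "HOL-Analysis.Analysis" "HOL-Probability.Probability"
begin

text \<open>Real d x d matrices: we use \<open>real^'n^'n\<close>, d = CARD('n).\<close>

definition psd_mat :: "real^'n^'n \<Rightarrow> bool" where
  "psd_mat H \<longleftrightarrow> transpose H = H \<and> (\<forall>x. 0 \<le> x \<bullet> (H *v x))"

definition pd_mat :: "real^'n^'n \<Rightarrow> bool" where
  "pd_mat H \<longleftrightarrow> transpose H = H \<and> (\<forall>x. x \<noteq> 0 \<longrightarrow> 0 < x \<bullet> (H *v x))"

definition well_structured :: "(real^'n^'n) set \<Rightarrow> bool" where
  "well_structured Hs \<longleftrightarrow> (\<exists>K.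
      (\<forall>c A. A \<in> K \<longrightarrow> c *\<^sub>R A \<in> K) \<and>
      (\<forall>A\<in>K. \<forall>B\<in>K. A + B \<in> K) \<and>
      (\<forall>A\<in>K. \<forall>B\<in>K. A ** B \<in> K) \<and>
      mat 1 \<in> K \<and>
      Hs = {H. psd_mat H} \<inter> K)"

definition Hnorm :: "real^'n^'n \<Rightarrow> real^'n \<Rightarrow> real" where
  "Hnorm H x = sqrt (x \<bullet> (H *v x))"

definition setnorm :: "(real^'n^'n) set \<Rightarrow> real^'n \<Rightarrow> real" where
  "setnorm Hs x = (SUP H\<in>{H\<in>Hs. trace H \<le> 1}. Hnorm H x)"

definition dualnorm :: "(real^'n^'n) set \<Rightarrow> real^'n \<Rightarrow> real" where
  "dualnorm Hs y = (SUP x\<in>{x. setnorm Hs x \<le> 1}. x \<bullet> y)"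

definition gradient :: "(real^'n \<Rightarrow> real) \<Rightarrow> real^'n \<Rightarrow> real^'n" where
  "gradient g x = (\<chi> i. frechet_derivative g (at x) (axis i 1))"

definition centred_grad ::
  "'w measure \<Rightarrow> ('t \<Rightarrow> 'w \<Rightarrow> real^'n \<Rightarrow> real) \<Rightarrow> 't \<Rightarrow> real^'n \<Rightarrow> 'w \<Rightarrow> real^'n" where
  "centred_grad M f t x \<omega> =
     gradient (f t \<omega>) x - (\<integral>\<omega>'. gradient (f t \<omega>') x \<partial>M)"

definition sigma_norm_sq ::
  "(real^'n \<Rightarrow> real) \<Rightarrow> 'w measure \<Rightarrow> ('t \<Rightarrow> 'w \<Rightarrow> real^'n \<Rightarrow> real) \<Rightarrow> 't set \<Rightarrow> ennreal" where
  "sigma_norm_sq N M f T =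
     (SUP p\<in>T \<times> UNIV. \<integral>\<^sup>+\<omega>. ennreal ((N (centred_grad M f (fst p) (snd p) \<omega>))\<^sup>2) \<partial>M)"

definition sigma_adaptive_sq ::
  "(real^'n^'n) set \<Rightarrow> 'w measure \<Rightarrow> ('t \<Rightarrow> 'w \<Rightarrow> real^'n \<Rightarrow> real) \<Rightarrow> 't set \<Rightarrow> ennreal" where
  "sigma_adaptive_sq Hs M f T =
     (INF H\<in>{H\<in>Hs. pd_mat H \<and> trace H \<le> 1}.
        SUP p\<in>T \<times> UNIV. \<integral>\<^sup>+\<omega>.
          ennreal (centred_grad M f (fst p) (snd p) \<omega> \<bullet>
                   (matrix_inv H *v centred_grad M f (fst p) (snd p) \<omega>)) \<partial>M)"

end

theory Submission
  imports Defs
begin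

(* Lower bound: for every admissible H, Cauchy-Schwarz in the H-seminorm gives
  \<langle>x, v\<rangle> = \<langle>x, H (H\<^sup>-\<^sup>1 v)\<rangle> \<le> \<parallel>x\<parallel>_H \<parallel>v\<parallel>_{H\<^sup>-\<^sup>1}, and \<parallel>x\<parallel>_H is at most the set norm of x;
  hence the dual norm of v is at most \<parallel>v\<parallel>_{H\<^sup>-\<^sup>1}.  Upper bound: the normalised identity I/d
  lies in every well-structured set, and v\<^sup>T (I/d)\<^sup>-\<^sup>1 v = d \<parallel>v\<parallel>\<^sup>2; moreover
  x\<^sup>T H x \<le> tr H \<parallel>x\<parallel>\<^sup>2 for positive semidefinite H bounds the set norm by the Euclidean norm,
  hence the Euclidean norm by the dual norm. *)

lemma symmetric_matrix_inner_commute: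
  fixes H :: "real^'n^'n"
  assumes "transpose H = H"
  shows "x \<bullet> (H *v y) = y \<bullet> (H *v x)"
  by (metis assms dot_lmul_matrix inner_commute transpose_matrix_vector)

lemma pd_imp_psd_mat: "pd_mat H \<Longrightarrow> psd_mat H"
  unfolding pd_mat_def psd_mat_def by (metis inner_zero_left order.refl order_less_imp_le)

lemma psd_mat_cauchy_schwarz:
  fixes H :: "real^'n^'n"
  assumes "psd_mat H"
  shows "(x \<bullet> (H *v y))\<^sup>2 \<le> (x \<bullet> (H *v x)) * (y \<bullet> (H *v y))"
proof -
  define a b c where "a = x \<bullet> (H *v x)" and "b = x \<bullet> (H *v y)" and "c = y \<bullet> (H *v y)"
  have quadratic_nonneg: "0 \<le> a - 2 * t * b + t\<^sup>2 * c" for t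
  proof -
    have "0 \<le> (x - t *\<^sub>R y) \<bullet> (H *v (x - t *\<^sub>R y))"
      using assms by (simp add: psd_mat_def)
    also have "\<dots> = a - t * (y \<bullet> (H *v x)) - t * b + t\<^sup>2 * c"
      by (simp add: a_def b_def c_def algebra_simps inner_diff_left inner_diff_right power2_eq_square)
    also have "y \<bullet> (H *v x) = b"
      using assms by (simp add: b_def psd_mat_def symmetric_matrix_inner_commute[of H y x])
    finally show ?thesis by (simp add: algebra_simps)
  qed
  have "0 \<le> c"
    using assms by (simp add: c_def psd_mat_def)
  have "b\<^sup>2 \<le> a * c"
  proof (cases "c = 0")
    case True
    have "b = 0"
    proof (rule ccontr)
      assume "b \<noteq> 0"
      then have "a - 2 * ((a + 1) / (2 * b)) * b = -1" by (simp add: field_simps)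
      with quadratic_nonneg[of "(a + 1) / (2 * b)"] True show False by simp
    qed
    with True show ?thesis by simp
  next
    case False
    with \<open>0 \<le> c\<close> have "0 < c" by simp
    have "0 \<le> a - 2 * (b / c) * b + (b / c)\<^sup>2 * c" by (rule quadratic_nonneg)
    also have "\<dots> = a - b\<^sup>2 / c" using \<open>0 < c\<close> by (simp add: field_simps power2_eq_square)
    finally show ?thesis using \<open>0 < c\<close> by (simp add: field_simps)
  qed
  then show ?thesis by (simp add: a_def b_def c_def)
qed

lemma Hnorm_nonneg: "psd_mat H \<Longrightarrow> 0 \<le> Hnorm H x"
  by (simp add: Hnorm_def psd_mat_def)

lemma Hnorm_cauchy_schwarz:
  assumes "psd_mat H"
  shows "x \<bullet> (H *v y) \<le> Hnorm H x * Hnorm H y"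
proof -
  have "x \<bullet> (H *v y) \<le> sqrt ((x \<bullet> (H *v y))\<^sup>2)" by simp
  also have "\<dots> \<le> sqrt ((x \<bullet> (H *v x)) * (y \<bullet> (H *v y)))"
    using psd_mat_cauchy_schwarz[OF assms] by (rule real_sqrt_le_mono)
  finally show ?thesis by (simp add: Hnorm_def real_sqrt_mult)
qed

lemma inner_axis_matrix_vector_axis: "axis i 1 \<bullet> ((H::real^'n^'n) *v axis j 1) = H$i$j"
proof -
  have "axis i 1 \<bullet> (H *v axis j 1) = (H *v axis j 1) $ i" by (simp add: inner_axis')
  also have "\<dots> = H$i$j"
    by (simp add: matrix_vector_mult_def axis_def if_distrib if_distribR sum.delta cong del: if_weak_cong)
  finally show ?thesis .
qed

lemma quadratic_form_expand:
  fixes H :: "real^'n^'n"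
  shows "x \<bullet> (H *v x) = (\<Sum>i\<in>UNIV. \<Sum>j\<in>UNIV. x$i * x$j * H$i$j)"
  by (simp add: inner_vec_def matrix_vector_mult_def sum_distrib_left algebra_simps)

lemma psd_mat_entry_bound:
  fixes H :: "real^'n^'n"
  assumes "psd_mat H"
  shows "\<bar>H$i$j\<bar> \<le> sqrt (H$i$i) * sqrt (H$j$j)"
  using real_sqrt_le_mono[OF psd_mat_cauchy_schwarz[OF assms, of "axis i 1" "axis j 1"]]
  by (simp add: inner_axis_matrix_vector_axis real_sqrt_mult)

lemma psd_mat_quadratic_form_le_trace:
  fixes H :: "real^'n^'n"
  assumes "psd_mat H"
  shows "x \<bullet> (H *v x) \<le> trace H * (norm x)\<^sup>2"
proof -
  define s where "s i = sqrt (H$i$i)" for i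
  have diag_nonneg: "0 \<le> H$i$i" for i
    using assms unfolding psd_mat_def by (metis inner_axis_matrix_vector_axis)
  have "x \<bullet> (H *v x) = (\<Sum>i\<in>UNIV. \<Sum>j\<in>UNIV. x$i * x$j * H$i$j)"
    by (rule quadratic_form_expand)
  also have "\<dots> \<le> (\<Sum>i\<in>UNIV. \<Sum>j\<in>UNIV. (\<bar>x$i\<bar> * s i) * (\<bar>x$j\<bar> * s j))"
  proof (intro sum_mono)
    fix i j
    have "x$i * x$j * H$i$j \<le> \<bar>x$i\<bar> * \<bar>x$j\<bar> * \<bar>H$i$j\<bar>"
      by (metis abs_ge_self abs_mult)
    also have "\<dots> \<le> \<bar>x$i\<bar> * \<bar>x$j\<bar> * (s i * s j)"
      unfolding s_def by (intro mult_left_mono psd_mat_entry_bound[OF assms]) simp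
    finally show "x$i * x$j * H$i$j \<le> (\<bar>x$i\<bar> * s i) * (\<bar>x$j\<bar> * s j)" by (simp add: ac_simps)
  qed
  also have "\<dots> = (\<Sum>i\<in>UNIV. \<bar>x$i\<bar> * s i)\<^sup>2"
    by (simp add: power2_eq_square sum_product)
  also have "\<dots> \<le> (\<Sum>i\<in>UNIV. \<bar>x$i\<bar>\<^sup>2) * (\<Sum>i\<in>UNIV. (s i)\<^sup>2)"
    by (rule Cauchy_Schwarz_ineq_sum)
  also have "(\<Sum>i\<in>UNIV. \<bar>x$i\<bar>\<^sup>2) = (norm x)\<^sup>2"
    using power2_norm_eq_inner[of x] by (simp add: inner_vec_def power2_eq_square)
  also have "(\<Sum>i\<in>UNIV. (s i)\<^sup>2) = trace H"
    using diag_nonneg by (simp add: s_def trace_def)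
  finally show ?thesis by (simp add: ac_simps)
qed

lemma Hnorm_le_norm:
  assumes "psd_mat H" "trace H \<le> 1"
  shows "Hnorm H x \<le> norm x"
proof -
  have "x \<bullet> (H *v x) \<le> trace H * (norm x)\<^sup>2"
    using assms(1) by (rule psd_mat_quadratic_form_le_trace)
  also have "\<dots> \<le> (norm x)\<^sup>2"
    using mult_right_mono[OF assms(2) zero_le_power2[of "norm x"]] by simp
  finally have "sqrt (x \<bullet> (H *v x)) \<le> sqrt ((norm x)\<^sup>2)"
    by (rule real_sqrt_le_mono)
  then show ?thesis
    by (simp add: Hnorm_def)
qed

lemma Hnorm_le_setnorm:
  assumes "Hs \<subseteq> {H. psd_mat H}" "H \<in> Hs" "trace H \<le> 1"
  shows "Hnorm H x \<le> setnorm Hs x"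
  unfolding setnorm_def
proof (rule cSUP_upper)
  show "H \<in> {H \<in> Hs. trace H \<le> 1}" using assms(2,3) by blast
  show "bdd_above ((\<lambda>H. Hnorm H x) ` {H \<in> Hs. trace H \<le> 1})"
    using assms(1) by (intro bdd_aboveI2[where M = "norm x"] Hnorm_le_norm) auto
qed

lemma setnorm_le_norm:
  assumes "Hs \<subseteq> {H. psd_mat H}" "H \<in> Hs" "trace H \<le> 1"
  shows "setnorm Hs x \<le> norm x"
  unfolding setnorm_def
  using assms by (intro cSUP_least Hnorm_le_norm) auto

lemma trace_scaled_identity: "trace (c *\<^sub>R mat 1 :: real^'n^'n) = c * real CARD('n)"
  by (simp add: trace_def mat_def)

lemma trace_normalized_identity: "trace (inverse (real CARD('n)) *\<^sub>R mat 1 :: real^'n^'n) = 1"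
  by (simp add: trace_scaled_identity)

lemma quadratic_form_scaled_identity: "x \<bullet> ((c *\<^sub>R mat 1 :: real^'n^'n) *v x) = c * (norm x)\<^sup>2"
  by (simp add: scaleR_matrix_vector_assoc[symmetric] power2_norm_eq_inner)

lemma transpose_scaled_identity: "transpose (c *\<^sub>R mat 1 :: real^'n^'n) = c *\<^sub>R mat 1"
  by (simp add: transpose_def mat_def vec_eq_iff)

lemma pd_mat_scaled_identity: "0 < c \<Longrightarrow> pd_mat (c *\<^sub>R mat 1 :: real^'n^'n)"
  by (simp add: pd_mat_def transpose_scaled_identity quadratic_form_scaled_identity)

lemma psd_mat_scaled_identity: "0 \<le> c \<Longrightarrow> psd_mat (c *\<^sub>R mat 1 :: real^'n^'n)"
  by (simp add: psd_mat_def transpose_scaled_identity quadratic_form_scaled_identity)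

lemma Hnorm_scaled_identity: "0 \<le> c \<Longrightarrow> Hnorm (c *\<^sub>R mat 1) x = sqrt c * norm x"
  by (simp add: Hnorm_def quadratic_form_scaled_identity real_sqrt_mult)

lemma matrix_inv_eqI:
  fixes A B :: "'a::semiring_1^'n^'n"
  assumes "A ** B = mat 1" "B ** A = mat 1"
  shows "matrix_inv A = B"
proof -
  have "A ** matrix_inv A = mat 1 \<and> matrix_inv A ** A = mat 1"
    unfolding matrix_inv_def using assms by (rule someI[of _ B, OF conjI])
  then show ?thesis
    by (metis assms(2) matrix_mul_assoc matrix_mul_lid matrix_mul_rid)
qed

lemma matrix_inv_scaled_identity:
  "c \<noteq> 0 \<Longrightarrow> matrix_inv (c *\<^sub>R mat 1 :: real^'n^'n) = inverse c *\<^sub>R mat 1"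
  by (intro matrix_inv_eqI) (simp_all add: matrix_scalar_ac)

lemma matrix_mul_matrix_inv:
  fixes A :: "'a::semiring_1^'n^'n"
  assumes "invertible A"
  shows "A ** matrix_inv A = mat 1"
  using assms matrix_inv_eqI unfolding invertible_def by metis

lemma pd_mat_invertible:
  fixes H :: "real^'n^'n"
  assumes "pd_mat H"
  shows "invertible H"
proof -
  have "\<forall>x. H *v x = 0 \<longrightarrow> x = 0"
    using assms unfolding pd_mat_def by (metis inner_zero_right less_irrefl)
  then show ?thesis
    by (simp add: invertible_left_inverse matrix_left_invertible_ker)
qed

lemma norm_le_setnorm:
  fixes Hs :: "(real^'n^'n) set"
  assumes "Hs \<subseteq> {H. psd_mat H}" "inverse (real CARD('n)) *\<^sub>R mat 1 \<in> Hs"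
  shows "norm x \<le> sqrt (real CARD('n)) * setnorm Hs x"
proof -
  have "Hnorm (inverse (real CARD('n)) *\<^sub>R mat 1) x \<le> setnorm Hs x"
    by (rule Hnorm_le_setnorm[OF assms eq_refl[OF trace_normalized_identity]])
  then have "norm x / sqrt (real CARD('n)) \<le> setnorm Hs x"
    by (simp add: Hnorm_scaled_identity real_sqrt_inverse divide_inverse ac_simps)
  then show ?thesis
    by (simp add: field_simps)
qed

lemma dualnorm_bdd_above:
  fixes Hs :: "(real^'n^'n) set"
  assumes "Hs \<subseteq> {H. psd_mat H}" "inverse (real CARD('n)) *\<^sub>R mat 1 \<in> Hs"
  shows "bdd_above ((\<lambda>x. x \<bullet> v) ` {x. setnorm Hs x \<le> 1})"
proof (rule bdd_aboveI2)
  fix x :: "real^'n"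
  assume "x \<in> {x. setnorm Hs x \<le> 1}"
  then have "norm x \<le> sqrt (real CARD('n))"
    using norm_le_setnorm[OF assms, of x] by (simp add: order_trans)
  then show "x \<bullet> v \<le> sqrt (real CARD('n)) * norm v"
    by (metis norm_cauchy_schwarz norm_ge_zero mult_right_mono order_trans)
qed

lemma norm_le_dualnorm:
  fixes Hs :: "(real^'n^'n) set"
  assumes "Hs \<subseteq> {H. psd_mat H}" "inverse (real CARD('n)) *\<^sub>R mat 1 \<in> Hs"
  shows "norm v \<le> dualnorm Hs v"
proof -
  define u where "u = sgn v"
  have "setnorm Hs u \<le> norm u"
    by (rule setnorm_le_norm[OF assms eq_refl[OF trace_normalized_identity]])
  also have "norm u \<le> 1"
    by (simp add: u_def norm_sgn)
  finally have "u \<bullet> v \<le> dualnorm Hs v"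
    unfolding dualnorm_def by (intro cSUP_upper dualnorm_bdd_above[OF assms]) simp
  moreover have "u \<bullet> v = norm v"
    by (cases "v = 0") (simp_all add: u_def sgn_div_norm power2_norm_eq_inner[symmetric] power2_eq_square)
  ultimately show ?thesis by simp
qed

lemma dualnorm_le_Hnorm_matrix_inv:
  fixes Hs :: "(real^'n^'n) set"
  assumes "Hs \<subseteq> {H. psd_mat H}" "H \<in> Hs" "pd_mat H" "trace H \<le> 1"
  shows "dualnorm Hs v \<le> Hnorm (matrix_inv H) v"
proof -
  define y where "y = matrix_inv H *v v"
  have psd: "psd_mat H"
    using assms(3) by (rule pd_imp_psd_mat)
  have Hy: "H *v y = v"
    using assms(3) by (simp add: y_def matrix_vector_mul_assoc matrix_mul_matrix_inv pd_mat_invertible)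
  have Hnorm_y: "Hnorm H y = Hnorm (matrix_inv H) v"
    unfolding Hnorm_def Hy by (simp add: y_def inner_commute)
  have "x \<bullet> v \<le> Hnorm H y" if "setnorm Hs x \<le> 1" for x
  proof -
    have "Hnorm H x \<le> 1"
      using Hnorm_le_setnorm[OF assms(1,2,4), of x] that by simp
    have "x \<bullet> v = x \<bullet> (H *v y)"
      by (simp add: Hy)
    also have "\<dots> \<le> Hnorm H x * Hnorm H y"
      using psd by (rule Hnorm_cauchy_schwarz)
    also have "\<dots> \<le> Hnorm H y"
      using \<open>Hnorm H x \<le> 1\<close> psd by (intro mult_left_le_one_le Hnorm_nonneg)
    finally show ?thesis .
  qed
  moreover have "setnorm Hs 0 \<le> 1"
    using setnorm_le_norm[OF assms(1,2,4), of 0] by simp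
  ultimately show ?thesis
    unfolding dualnorm_def Hnorm_y[symmetric] by (intro cSUP_least) auto
qed

lemma dualnorm_sq_le_inverse_quadratic_form:
  fixes Hs :: "(real^'n^'n) set"
  assumes "Hs \<subseteq> {H. psd_mat H}" "inverse (real CARD('n)) *\<^sub>R mat 1 \<in> Hs"
    and "H \<in> Hs" "pd_mat H" "trace H \<le> 1"
  shows "(dualnorm Hs v)\<^sup>2 \<le> v \<bullet> (matrix_inv H *v v)"
proof -
  have "0 \<le> dualnorm Hs v"
    using norm_le_dualnorm[OF assms(1,2)] norm_ge_zero order_trans by blast
  moreover have "dualnorm Hs v \<le> sqrt (v \<bullet> (matrix_inv H *v v))"
    using dualnorm_le_Hnorm_matrix_inv[OF assms(1,3-5)] by (simp add: Hnorm_def)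
  ultimately have "(dualnorm Hs v)\<^sup>2 \<le> (sqrt (v \<bullet> (matrix_inv H *v v)))\<^sup>2"
    and "0 \<le> v \<bullet> (matrix_inv H *v v)"
    using real_sqrt_ge_0_iff by (blast intro: power_mono order_trans)+
  then show ?thesis by simp
qed

lemma well_structured_psd: "well_structured Hs \<Longrightarrow> Hs \<subseteq> {H. psd_mat H}"
  unfolding well_structured_def by blast

lemma well_structured_scaled_identity:
  assumes "well_structured Hs" "0 \<le> c"
  shows "c *\<^sub>R mat 1 \<in> Hs"
  using assms psd_mat_scaled_identity unfolding well_structured_def by blast

lemma centred_grad_borel_measurable:
  assumes "integrable M (\<lambda>\<omega>. gradient (f t \<omega>) x)"
  shows "centred_grad M f t x \<in> borel_measurable M"
  unfolding centred_grad_def[abs_def]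
  by (intro borel_measurable_diff borel_measurable_integrable[OF assms] borel_measurable_const)

lemma sigma_norm_sq_dualnorm_le_sigma_adaptive_sq:
  fixes Hs :: "(real^'n^'n) set"
  assumes "Hs \<subseteq> {H. psd_mat H}" "inverse (real CARD('n)) *\<^sub>R mat 1 \<in> Hs"
  shows "sigma_norm_sq (dualnorm Hs) M f T \<le> sigma_adaptive_sq Hs M f T"
  unfolding sigma_norm_sq_def sigma_adaptive_sq_def
proof (intro INF_greatest SUP_mono' nn_integral_mono ennreal_leI)
  fix H p \<omega>
  assume "H \<in> {H \<in> Hs. pd_mat H \<and> trace H \<le> 1}"
  then show "(dualnorm Hs (centred_grad M f (fst p) (snd p) \<omega>))\<^sup>2
      \<le> centred_grad M f (fst p) (snd p) \<omega> \<bullet> (matrix_inv H *v centred_grad M f (fst p) (snd p) \<omega>)"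
    using assms by (intro dualnorm_sq_le_inverse_quadratic_form) auto
qed

lemma sigma_adaptive_sq_le_card_mult_sigma_norm_sq_dualnorm:
  fixes Hs :: "(real^'n^'n) set"
  assumes "Hs \<subseteq> {H. psd_mat H}" "inverse (real CARD('n)) *\<^sub>R mat 1 \<in> Hs"
    and measurable: "\<And>t x. t \<in> T \<Longrightarrow> centred_grad M f t x \<in> borel_measurable M"
  shows "sigma_adaptive_sq Hs M f T \<le> of_nat CARD('n) * sigma_norm_sq (dualnorm Hs) M f T"
proof -
  define d where "d = real CARD('n)"
  let ?g = "\<lambda>p. centred_grad M f (fst p) (snd p)"
  have "sigma_adaptive_sq Hs M f T
      \<le> (SUP p\<in>T \<times> UNIV. \<integral>\<^sup>+\<omega>. ennreal (?g p \<omega> \<bullet> (matrix_inv (inverse d *\<^sub>R mat 1) *v ?g p \<omega>)) \<partial>M)"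
    unfolding sigma_adaptive_sq_def d_def using assms(2)
    by (intro INF_lower) (simp add: pd_mat_scaled_identity trace_normalized_identity)
  also have "\<dots> = (SUP p\<in>T \<times> UNIV. \<integral>\<^sup>+\<omega>. ennreal d * ennreal ((norm (?g p \<omega>))\<^sup>2) \<partial>M)"
    by (simp add: d_def matrix_inv_scaled_identity quadratic_form_scaled_identity ennreal_mult)
  also have "\<dots> = (SUP p\<in>T \<times> UNIV. ennreal d * \<integral>\<^sup>+\<omega>. ennreal ((norm (?g p \<omega>))\<^sup>2) \<partial>M)"
    using measurable by (intro SUP_cong refl nn_integral_cmult) auto
  also have "\<dots> \<le> (SUP p\<in>T \<times> UNIV. ennreal d * \<integral>\<^sup>+\<omega>. ennreal ((dualnorm Hs (?g p \<omega>))\<^sup>2) \<partial>M)"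
    by (intro SUP_mono' mult_left_mono nn_integral_mono ennreal_leI power_mono
        norm_le_dualnorm[OF assms(1,2)]) auto
  also have "\<dots> = ennreal d * sigma_norm_sq (dualnorm Hs) M f T"
    by (simp add: sigma_norm_sq_def SUP_mult_left_ennreal)
  finally show ?thesis
    by (simp add: d_def ennreal_of_nat_eq_real_of_nat)
qed

theorem proposition4p1:
  fixes Hs :: "(real^'n^'n) set"
    and M :: "'w measure"
    and f :: "'t \<Rightarrow> 'w \<Rightarrow> real^'n \<Rightarrow> real"
    and T :: "'t set"
  assumes "well_structured Hs"
    and "prob_space M"
    and "\<And>t \<omega> x. t \<in> T \<Longrightarrow> \<omega> \<in> space M \<Longrightarrow> f t \<omega> differentiable (at x)"
    and "\<And>t x. t \<in> T \<Longrightarrow> integrable M (\<lambda>\<omega>. gradient (f t \<omega>) x)"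
  shows "sigma_norm_sq (dualnorm Hs) M f T \<le> sigma_adaptive_sq Hs M f T
       \<and> sigma_adaptive_sq Hs M f T \<le> of_nat CARD('n) * sigma_norm_sq (dualnorm Hs) M f T"
proof -
  \<comment> \<open>Integrability is used only for measurability of the centred gradients.\<close>
  have psd: "Hs \<subseteq> {H. psd_mat H}"
    using assms(1) by (rule well_structured_psd)
  have normalized_identity: "inverse (real CARD('n)) *\<^sub>R mat 1 \<in> Hs"
    using assms(1) by (rule well_structured_scaled_identity) simp
  have "\<And>t x. t \<in> T \<Longrightarrow> centred_grad M f t x \<in> borel_measurable M"
    using assms(4) by (rule centred_grad_borel_measurable)
  with psd normalized_identity show ?thesis
    by (simp add: sigma_norm_sq_dualnorm_le_sigma_adaptive_sq
        sigma_adaptive_sq_le_card_mult_sigma_norm_sq_dualnorm)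
qed

end
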